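(* Let $n\ge1$. Every unitary on $n$ qubits of the form $C\,Z\,L$ (a $\textsc{P}$-layer $L$ applied first, then a $\textsc{CZ}$-layer $Z$, then a $\textsc{C}$-layer $C$; stage form -P-CZ-C-) can also be written as $Z'L'C'$ (stage form -C-P-CZ-) for some $\textsc{C}$-layer $C'$, $\textsc{P}$-layer $L'$ and $\textsc{CZ}$-layer $Z'$; and, since $\textsc{P}$-layers and $\textsc{CZ}$-layers commute, also in the stage forms -CZ-P-C- and -C-CZ-P-.
   Context: Gates: $\textsc{P}=\mathrm{diag}(1,i)$, $\textsc{CNOT}|a,b\rangle=|a,a\oplus b\rangle$, $\textsc{CZ}|a,b\rangle=(-1)^{ab}|a,b\rangle$. Layers on $n$ qubits: a $\textsc{P}$-layer is $\bigotimes_{j=1}^n \textsc{P}^{a_j}$ with $a_j\in\{0,1,2,3\}$; a $\textsc{C}$-layer is any unitary implemented by a circuit of $\textsc{CNOT}$ gates (equivalently $|x\rangle\mapsto|Ax\rangle$ for an invertible matrix $A$ over $\mathbb F_2$); a $\textsc{CZ}$-layer is any product of $\textsc{CZ}$ gates on pairs of the $n$ qubits. Stage notation -X-Y-Z- means X is applied first, then Y, then Z (operator product $ZYX$). *)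

theory Defs
  imports Complex_Main "Jordan_Normal_Form.Matrix"
begin

text \<open>The computational basis state |x_0 ... x_(n-1)> is indexed by the natural
  number x < 2^n whose j-th binary digit (bit x j) is the value of qubit j.\<close>

definition qdim :: "nat \<Rightarrow> nat" where
  "qdim n = 2 ^ n"

text \<open>P-layer: tensor product over j < n of P^(a j), P = diag(1, i).\<close>
definition P_layer :: "nat \<Rightarrow> (nat \<Rightarrow> nat) \<Rightarrow> complex mat" where
  "P_layer n a = mat (qdim n) (qdim n)
     (\<lambda>(y, x). if y = x then (\<Prod>j<n. \<i> ^ (a j * (if bit x j then 1 else 0))) else 0)"

definition is_P_layer :: "nat \<Rightarrow> complex mat \<Rightarrow> bool" where
  "is_P_layer n L \<longleftrightarrow> (\<exists>a. (\<forall>j<n. a j \<in> {0,1,2,3}) \<and> L = P_layer n a)"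

definition cnot_gate :: "nat \<Rightarrow> nat \<Rightarrow> nat \<Rightarrow> complex mat" where
  "cnot_gate n c t = mat (qdim n) (qdim n)
     (\<lambda>(y, x). if y = (if bit x c then flip_bit t x else x) then 1 else 0)"

definition cz_gate :: "nat \<Rightarrow> nat \<Rightarrow> nat \<Rightarrow> complex mat" where
  "cz_gate n j k = mat (qdim n) (qdim n)
     (\<lambda>(y, x). if y = x then (if bit x j \<and> bit x k then -1 else 1) else 0)"

definition circuit :: "nat \<Rightarrow> complex mat list \<Rightarrow> complex mat" where
  "circuit n gs = foldr (\<lambda>g U. U * g) gs (1\<^sub>m (qdim n))"

definition is_C_layer :: "nat \<Rightarrow> complex mat \<Rightarrow> bool" where
  "is_C_layer n C \<longleftrightarrow> (\<exists>cs. (\<forall>(c, t) \<in> set cs. c < n \<and> t < n \<and> c \<noteq> t) \<and>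
      C = circuit n (map (\<lambda>(c, t). cnot_gate n c t) cs))"

definition is_CZ_layer :: "nat \<Rightarrow> complex mat \<Rightarrow> bool" where
  "is_CZ_layer n Z \<longleftrightarrow> (\<exists>ps. (\<forall>(j, k) \<in> set ps. j < n \<and> k < n \<and> j \<noteq> k) \<and>
      Z = circuit n (map (\<lambda>(j, k). cz_gate n j k) ps))"

end

theory Submission
  imports Defs
begin

text \<open>All three layer types act on the computational basis in a simple way: P- and CZ-layers
  are diagonal, with diagonal entries \<open>i^(a\<cdot>x) (-1)^(x\<^sup>T B x)\<close>, and a CNOT permutes the basis.
  Moving a diagonal matrix past a CNOT composes its diagonal with the CNOT permutation
  \<open>x\<^sub>t \<mapsto> x\<^sub>t \<oplus> x\<^sub>c\<close>, and the class of such phase functions is closed under this substitution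
  because \<open>x\<^sub>t \<oplus> x\<^sub>c = x\<^sub>t + x\<^sub>c - 2 x\<^sub>t x\<^sub>c\<close>. Hence \<open>C Z L = Z' L' C\<close>; the other stage forms follow
  because diagonal matrices commute.\<close>

definition cnot_map :: "nat \<Rightarrow> nat \<Rightarrow> nat \<Rightarrow> nat" where
  "cnot_map c t x = (if bit x c then flip_bit t x else x)"

lemma bit_cnot_map:
  "c \<noteq> t \<Longrightarrow> bit (cnot_map c t x) j \<longleftrightarrow> (if j = t then bit x t \<noteq> bit x c else bit x j)"
  by (auto simp: cnot_map_def bit_flip_bit_iff)

lemma cnot_map_cnot_map: "c \<noteq> t \<Longrightarrow> cnot_map c t (cnot_map c t x) = x"
  by (rule bit_eqI) (auto simp: bit_cnot_map)

lemma cnot_gate_carrier [simp]: "cnot_gate n c t \<in> carrier_mat (qdim n) (qdim n)"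
  by (simp add: cnot_gate_def)

lemma cnot_gate_mult_mat_diag:
  assumes "c \<noteq> t"
  shows "cnot_gate n c t * mat_diag (qdim n) f
       = mat_diag (qdim n) (f \<circ> cnot_map c t) * cnot_gate n c t"
proof -
  have "cnot_map c t (cnot_map c t x) = x" for x
    using assms by (rule cnot_map_cnot_map)
  then show ?thesis
    by (subst mat_diag_mult_right[OF cnot_gate_carrier],
        subst mat_diag_mult_left[OF cnot_gate_carrier])
      (auto simp: cnot_gate_def cnot_map_def[symmetric])
qed

lemma circuit_Cons: "circuit n (g # gs) = circuit n gs * g"
  by (simp add: circuit_def)

lemma circuit_carrier:
  "(\<And>g. g \<in> set gs \<Longrightarrow> g \<in> carrier_mat (qdim n) (qdim n)) \<Longrightarrow>
   circuit n gs \<in> carrier_mat (qdim n) (qdim n)"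
  by (induction gs) (auto simp: circuit_def)

inductive pcz_phase :: "nat \<Rightarrow> (nat \<Rightarrow> complex) \<Rightarrow> bool" for n where
  one: "pcz_phase n (\<lambda>x. 1)"
| P: "j < n \<Longrightarrow> pcz_phase n (\<lambda>x. if bit x j then \<i> else 1)"
| CZ: "j < n \<Longrightarrow> k < n \<Longrightarrow> j \<noteq> k \<Longrightarrow> pcz_phase n (\<lambda>x. if bit x j \<and> bit x k then -1 else 1)"
| mult: "pcz_phase n f \<Longrightarrow> pcz_phase n g \<Longrightarrow> pcz_phase n (\<lambda>x. f x * g x)"

lemma pcz_phase_mult3:
  assumes "pcz_phase n f" "pcz_phase n g" "pcz_phase n h" "\<And>x. u x = f x * g x * h x"
  shows "pcz_phase n u"
proof -
  have "u = (\<lambda>x. f x * g x * h x)" using assms(4) by auto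
  then show ?thesis using assms(1-3) by (simp add: pcz_phase.mult)
qed

lemma pcz_phase_comp_cnot_map:
  assumes "pcz_phase n f" "c < n" "t < n" "c \<noteq> t"
  shows "pcz_phase n (f \<circ> cnot_map c t)"
  using assms(1)
proof induction
  \<comment> \<open>With \<open>x' = cnot_map c t x\<close>: \<open>i^x'\<^sub>t = i^x\<^sub>t i^x\<^sub>c (-1)^(x\<^sub>t x\<^sub>c)\<close>,
    \<open>(-1)^(x'\<^sub>t x\<^sub>c) = (-1)^(x\<^sub>t x\<^sub>c) i^(2 x\<^sub>c)\<close> and \<open>(-1)^(x'\<^sub>t x\<^sub>l) = (-1)^(x\<^sub>t x\<^sub>l) (-1)^(x\<^sub>c x\<^sub>l)\<close>.\<close>
  case one
  show ?case by (simp add: o_def pcz_phase.one)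
next
  case (P j)
  show ?case
  proof (cases "j = t")
    case True
    show ?thesis
      by (rule pcz_phase_mult3[OF pcz_phase.P[OF assms(3)] pcz_phase.P[OF assms(2)]
            pcz_phase.CZ[OF assms(3,2) assms(4)[symmetric]]])
        (use True assms(4) in \<open>auto simp: bit_cnot_map\<close>)
  next
    case False
    then show ?thesis using pcz_phase.P[OF P] assms(4) by (simp add: o_def bit_cnot_map)
  qed
next
  case (CZ j k)
  have S_c: "pcz_phase n (\<lambda>x. if bit x c then \<i> else 1)"
    using assms(2) by (rule pcz_phase.P)
  have CZ_tc: "pcz_phase n (\<lambda>x. if bit x t \<and> bit x c then -1 else 1)"
    using assms by (intro pcz_phase.CZ) auto
  consider "{j, k} = {t, c}" | l where "{j, k} = {t, l}" "l \<noteq> c" "l \<noteq> t" "l < n"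
    | "j \<noteq> t" "k \<noteq> t"
    using CZ by blast
  then show ?case
  proof cases
    case 1
    show ?thesis
      by (rule pcz_phase_mult3[OF CZ_tc S_c S_c]) (use 1 assms(4) in \<open>auto simp: bit_cnot_map\<close>)
  next
    case 2
    have "pcz_phase n (\<lambda>x. if bit x t \<and> bit x l then -1 else 1)"
         "pcz_phase n (\<lambda>x. if bit x c \<and> bit x l then -1 else 1)"
      using 2 assms by (auto intro: pcz_phase.CZ)
    then show ?thesis
      by (rule pcz_phase_mult3[OF _ _ pcz_phase.one])
        (use 2 CZ(3) assms(4) in \<open>auto simp: bit_cnot_map doubleton_eq_iff\<close>)
  next
    case 3
    then show ?thesis using pcz_phase.CZ[OF CZ] assms(4) by (simp add: o_def bit_cnot_map)
  qed
next
  case (mult f g)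
  then show ?case by (simp add: o_def pcz_phase.mult)
qed

lemma C_layer_mult_mat_diag:
  assumes "is_C_layer n C" "pcz_phase n f"
  shows "\<exists>g. pcz_phase n g \<and> C * mat_diag (qdim n) f = mat_diag (qdim n) g * C"
proof -
  obtain cs where cs: "\<forall>(c, t) \<in> set cs. c < n \<and> t < n \<and> c \<noteq> t"
    and C: "C = circuit n (map (\<lambda>(c, t). cnot_gate n c t) cs)"
    using assms(1) unfolding is_C_layer_def by blast
  from cs assms(2) show ?thesis
    unfolding C
  proof (induction cs arbitrary: f)
    case Nil
    show ?case
      by (intro exI[of _ f])
        (simp add: Nil.prems circuit_def left_mult_one_mat[OF mat_diag_dim]
           right_mult_one_mat[OF mat_diag_dim])
  next
    case (Cons ct cs)
    obtain c t where ct: "ct = (c, t)" "c < n" "t < n" "c \<noteq> t"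
      using Cons.prems(1) by (cases ct) auto
    let ?C = "circuit n (map (\<lambda>(c, t). cnot_gate n c t) cs)"
    have C_carrier: "?C \<in> carrier_mat (qdim n) (qdim n)"
      by (rule circuit_carrier) auto
    obtain g where g: "pcz_phase n g"
      and g_comm: "?C * mat_diag (qdim n) (f \<circ> cnot_map c t) = mat_diag (qdim n) g * ?C"
      using Cons.IH Cons.prems pcz_phase_comp_cnot_map[OF Cons.prems(2) ct(2-4)] by auto
    have "?C * cnot_gate n c t * mat_diag (qdim n) f
        = ?C * (cnot_gate n c t * mat_diag (qdim n) f)"
      by (rule assoc_mult_mat[OF C_carrier cnot_gate_carrier mat_diag_dim])
    also have "\<dots> = ?C * (mat_diag (qdim n) (f \<circ> cnot_map c t) * cnot_gate n c t)"
      by (simp add: cnot_gate_mult_mat_diag ct(4))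
    also have "\<dots> = ?C * mat_diag (qdim n) (f \<circ> cnot_map c t) * cnot_gate n c t"
      by (rule assoc_mult_mat[OF C_carrier mat_diag_dim cnot_gate_carrier, symmetric])
    also have "\<dots> = mat_diag (qdim n) g * (?C * cnot_gate n c t)"
      unfolding g_comm by (rule assoc_mult_mat[OF mat_diag_dim C_carrier cnot_gate_carrier])
    finally show ?case
      using g by (auto simp: ct(1) circuit_Cons)
  qed
qed

definition p_phase :: "nat \<Rightarrow> (nat \<Rightarrow> nat) \<Rightarrow> nat \<Rightarrow> complex" where
  "p_phase n a x = (\<Prod>j<n. \<i> ^ (a j * (if bit x j then 1 else 0)))"

definition cz_phase :: "(nat \<times> nat) list \<Rightarrow> nat \<Rightarrow> complex" where
  "cz_phase ps x = (\<Prod>(j, k) \<leftarrow> ps. if bit x j \<and> bit x k then -1 else 1)"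

lemma P_layer_eq_mat_diag: "P_layer n a = mat_diag (qdim n) (p_phase n a)"
  by (auto simp: P_layer_def mat_diag_def p_phase_def)

lemma CZ_circuit_eq_mat_diag:
  "circuit n (map (\<lambda>(j, k). cz_gate n j k) ps) = mat_diag (qdim n) (cz_phase ps)"
proof (induction ps)
  case Nil
  show ?case by (simp add: circuit_def cz_phase_def)
next
  case (Cons jk ps)
  obtain j k where "jk = (j, k)" by fastforce
  moreover have "cz_gate n j k = mat_diag (qdim n) (\<lambda>x. if bit x j \<and> bit x k then -1 else 1)"
    by (auto simp: cz_gate_def mat_diag_def)
  ultimately show ?case
    by (simp add: circuit_Cons Cons cz_phase_def mult.commute)
qed

lemma i_power_mod_4: "\<i> ^ m = \<i> ^ (m mod 4)"
proof -
  have "\<i> ^ m = (\<i> ^ 4) ^ (m div 4) * \<i> ^ (m mod 4)"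
    by (metis div_mult_mod_eq power_add power_mult mult.commute)
  also have "\<i> ^ 4 = (1 :: complex)"
    using i_even_power[of 2] by simp
  finally show ?thesis by simp
qed

lemma p_phase_mod_4: "p_phase n a = p_phase n (\<lambda>j. a j mod 4)"
proof -
  have "\<i> ^ (a j * b) = \<i> ^ (a j mod 4 * b)" for j b
    by (metis i_power_mod_4 power_mult)
  then show ?thesis by (intro ext) (simp add: p_phase_def)
qed

lemma p_phase_add: "p_phase n (\<lambda>j. a j + b j) x = p_phase n a x * p_phase n b x"
  by (simp add: p_phase_def distrib_right power_add prod.distrib)

lemma pcz_phase_p_phase: "pcz_phase n (p_phase n a)"
proof -
  have "pcz_phase n (\<lambda>x. \<i> ^ (m * (if bit x j then 1 else 0)))" if "j < n" for j m
  proof (induction m)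
    case 0
    show ?case using pcz_phase.one by simp
  next
    case (Suc m)
    have power_Suc_eq: "(\<lambda>x. \<i> ^ (Suc m * (if bit x j then 1 else 0)))
        = (\<lambda>x. (if bit x j then \<i> else 1) * \<i> ^ (m * (if bit x j then 1 else 0)))"
      by auto
    show ?case
      unfolding power_Suc_eq by (rule pcz_phase.mult[OF pcz_phase.P[OF \<open>j < n\<close>] Suc])
  qed
  note power_phase = this
  have "pcz_phase n (\<lambda>x. \<Prod>j<m. \<i> ^ (a j * (if bit x j then 1 else 0)))" if "m \<le> n" for m
    using that
  proof (induction m)
    case 0
    show ?case using pcz_phase.one by simp
  next
    case (Suc m)
    then show ?case
      using pcz_phase.mult[OF Suc.IH power_phase[of m "a m"]] by simp
  qed
  then show ?thesis unfolding p_phase_def by blast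
qed

lemma pcz_phase_cz_phase:
  "\<forall>(j, k) \<in> set ps. j < n \<and> k < n \<and> j \<noteq> k \<Longrightarrow> pcz_phase n (cz_phase ps)"
proof (induction ps)
  case Nil
  show ?case using pcz_phase.one by (simp add: cz_phase_def)
next
  case (Cons jk ps)
  obtain j k where jk: "jk = (j, k)" "j < n" "k < n" "j \<noteq> k"
    using Cons.prems by (cases jk) auto
  show ?case
    using pcz_phase.mult[OF pcz_phase.CZ[OF jk(2-4)] Cons.IH] Cons.prems
    by (simp add: jk(1) cz_phase_def)
qed

lemma pcz_phase_eq_cz_phase_p_phase:
  assumes "pcz_phase n f"
  shows "\<exists>ps a. (\<forall>(j, k) \<in> set ps. j < n \<and> k < n \<and> j \<noteq> k) \<and>
           f = (\<lambda>x. cz_phase ps x * p_phase n a x)"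
  using assms
proof induction
  case one
  show ?case
    by (rule exI[of _ "[]"], rule exI[of _ "\<lambda>_. 0"]) (simp add: cz_phase_def p_phase_def)
next
  case (P j)
  have "p_phase n (\<lambda>l. if l = j then 1 else 0) x
      = (\<Prod>l<n. if l = j then \<i> ^ (if bit x j then 1 else 0) else 1)" for x
    unfolding p_phase_def by (rule prod.cong) auto
  then have "p_phase n (\<lambda>l. if l = j then 1 else 0) x = (if bit x j then \<i> else 1)" for x
    using P by (simp add: prod.delta)
  then show ?case
    by (intro exI[of _ "[]"] exI[of _ "\<lambda>l. if l = j then 1 else 0"]) (auto simp: cz_phase_def)
next
  case (CZ j k)
  then show ?case
    by (intro exI[of _ "[(j, k)]"] exI[of _ "\<lambda>_. 0"]) (auto simp: cz_phase_def p_phase_def)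
next
  case (mult f g)
  then obtain ps a qs b where
    "\<forall>(j, k) \<in> set ps. j < n \<and> k < n \<and> j \<noteq> k" "f = (\<lambda>x. cz_phase ps x * p_phase n a x)"
    "\<forall>(j, k) \<in> set qs. j < n \<and> k < n \<and> j \<noteq> k" "g = (\<lambda>x. cz_phase qs x * p_phase n b x)"
    by blast
  then show ?case
    by (intro exI[of _ "ps @ qs"] exI[of _ "\<lambda>j. a j + b j"])
      (auto simp: cz_phase_def p_phase_add)
qed

lemma P_layer_mat_diag: "is_P_layer n L \<Longrightarrow> \<exists>a. L = mat_diag (qdim n) (p_phase n a)"
  by (auto simp: is_P_layer_def P_layer_eq_mat_diag)

lemma CZ_layer_mat_diag:
  "is_CZ_layer n Z \<Longrightarrow>
   \<exists>ps. (\<forall>(j, k) \<in> set ps. j < n \<and> k < n \<and> j \<noteq> k) \<and> Z = mat_diag (qdim n) (cz_phase ps)"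
  by (auto simp: is_CZ_layer_def CZ_circuit_eq_mat_diag)

lemma C_layer_carrier: "is_C_layer n C \<Longrightarrow> C \<in> carrier_mat (qdim n) (qdim n)"
  by (auto simp: is_C_layer_def intro!: circuit_carrier)

lemma P_layer_carrier: "is_P_layer n L \<Longrightarrow> L \<in> carrier_mat (qdim n) (qdim n)"
  by (auto dest: P_layer_mat_diag)

lemma CZ_layer_carrier: "is_CZ_layer n Z \<Longrightarrow> Z \<in> carrier_mat (qdim n) (qdim n)"
  by (auto dest: CZ_layer_mat_diag)

lemma P_layer_commute_CZ_layer:
  "is_P_layer n L \<Longrightarrow> is_CZ_layer n Z \<Longrightarrow> L * Z = Z * L"
proof -
  assume "is_P_layer n L" "is_CZ_layer n Z"
  then obtain a ps where "L = mat_diag (qdim n) (p_phase n a)" "Z = mat_diag (qdim n) (cz_phase ps)"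
    using P_layer_mat_diag CZ_layer_mat_diag by blast
  then show ?thesis by (simp add: mult.commute)
qed

lemma CZ_layer_mult_P_layer_pcz_phase:
  assumes "is_CZ_layer n Z" "is_P_layer n L"
  shows "\<exists>f. pcz_phase n f \<and> Z * L = mat_diag (qdim n) f"
proof -
  obtain a where "L = mat_diag (qdim n) (p_phase n a)"
    using P_layer_mat_diag[OF assms(2)] by blast
  moreover obtain ps where ps: "\<forall>(j, k) \<in> set ps. j < n \<and> k < n \<and> j \<noteq> k"
    and "Z = mat_diag (qdim n) (cz_phase ps)"
    using CZ_layer_mat_diag[OF assms(1)] by blast
  ultimately have "Z * L = mat_diag (qdim n) (\<lambda>x. cz_phase ps x * p_phase n a x)"
    by simp
  with pcz_phase.mult[OF pcz_phase_cz_phase[OF ps] pcz_phase_p_phase] show ?thesis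
    by blast
qed

lemma pcz_phase_CZ_layer_mult_P_layer:
  assumes "pcz_phase n f"
  shows "\<exists>Z L. is_CZ_layer n Z \<and> is_P_layer n L \<and> mat_diag (qdim n) f = Z * L"
proof -
  obtain ps a where ps: "\<forall>(j, k) \<in> set ps. j < n \<and> k < n \<and> j \<noteq> k"
    and "f = (\<lambda>x. cz_phase ps x * p_phase n a x)"
    using pcz_phase_eq_cz_phase_p_phase[OF assms] by blast
  then have f: "f = (\<lambda>x. cz_phase ps x * p_phase n (\<lambda>j. a j mod 4) x)"
    by (simp only: p_phase_mod_4[of n a])
  have "a j mod 4 \<in> {0, 1, 2, 3}" for j
    by (simp only: insert_iff empty_iff) presburger
  then have "is_P_layer n (P_layer n (\<lambda>j. a j mod 4))"
    unfolding is_P_layer_def by (intro exI[of _ "\<lambda>j. a j mod 4"]) simp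
  moreover have "is_CZ_layer n (mat_diag (qdim n) (cz_phase ps))"
    using ps by (auto simp: is_CZ_layer_def CZ_circuit_eq_mat_diag)
  moreover have "mat_diag (qdim n) f = mat_diag (qdim n) (cz_phase ps) * P_layer n (\<lambda>j. a j mod 4)"
    by (simp add: f P_layer_eq_mat_diag)
  ultimately show ?thesis
    by blast
qed

theorem mainTheorem2:
  fixes n :: nat and C Z L :: "complex mat"
  assumes "n \<ge> 1"
    and "is_P_layer n L" and "is_CZ_layer n Z" and "is_C_layer n C"
  shows "(\<exists>C' L' Z'. is_C_layer n C' \<and> is_P_layer n L' \<and> is_CZ_layer n Z' \<and>
            C * Z * L = Z' * L' * C')
       \<and> (\<exists>C' L' Z'. is_C_layer n C' \<and> is_P_layer n L' \<and> is_CZ_layer n Z' \<and>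
            C * Z * L = C' * L' * Z')
       \<and> (\<exists>C' L' Z'. is_C_layer n C' \<and> is_P_layer n L' \<and> is_CZ_layer n Z' \<and>
            C * Z * L = L' * Z' * C')"
proof -
  obtain f where f: "pcz_phase n f" "Z * L = mat_diag (qdim n) f"
    using CZ_layer_mult_P_layer_pcz_phase[OF assms(3,2)] by blast
  obtain g where g: "pcz_phase n g" "C * mat_diag (qdim n) f = mat_diag (qdim n) g * C"
    using C_layer_mult_mat_diag[OF assms(4) f(1)] by blast
  obtain Z' L' where layers': "is_CZ_layer n Z'" "is_P_layer n L'" "mat_diag (qdim n) g = Z' * L'"
    using pcz_phase_CZ_layer_mult_P_layer[OF g(1)] by blast
  note carriers =
    C_layer_carrier[OF assms(4)] CZ_layer_carrier[OF assms(3)] P_layer_carrier[OF assms(2)]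
  have assoc: "C * Z * L = C * (Z * L)" "C * L * Z = C * (L * Z)"
    using assoc_mult_mat[OF carriers(1,2,3)] assoc_mult_mat[OF carriers(1,3,2)] by auto
  have "C * Z * L = Z' * L' * C"
    unfolding assoc f(2) g(2) layers'(3) ..
  moreover have "C * Z * L = C * L * Z"
    unfolding assoc P_layer_commute_CZ_layer[OF assms(2,3)] ..
  moreover have "Z' * L' * C = L' * Z' * C"
    unfolding P_layer_commute_CZ_layer[OF layers'(2,1)] ..
  ultimately show ?thesis
    using assms(2-4) layers'(1,2) by metis
qed

end
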